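(* Fix $d\in\mathbb{N}_+$, $\ell>0$, $\nu>1/2$, and let $k:\mathbb{S}^d\times\mathbb{S}^d\to\mathbb{R}$ be the Matérn kernel $k(\bm{x},\tilde{\bm{x}})=\frac{2^{1-\nu}}{\Gamma(\nu)}\big(\frac{\sqrt{2\nu}\|\bm{x}-\tilde{\bm{x}}\|_2}{\ell}\big)^{\nu}K_\nu\big(\frac{\sqrt{2\nu}\|\bm{x}-\tilde{\bm{x}}\|_2}{\ell}\big)$, written as $k(\bm{x},\tilde{\bm{x}})=\tilde{k}(\bm{x}^\top\tilde{\bm{x}})$ for a continuous $\tilde{k}:[-1,1]\to\mathbb{R}$. Then for every integer $m>2\nu$, the eigenvalue $$\lambda_m=|\mathbb{S}^{d-1}|\int_{-1}^1P_{m,d+1}(t)\tilde{k}(t)(1-t^2)^{\frac{d-2}{2}}\,\mathrm{d}t$$ satisfies $$\lambda_m\le\frac{\tilde{C}_{d,\nu}}{\ell^{2\nu}}m^{-2\nu-d},\qquad \tilde{C}_{d,\nu}=C_{d,\nu}\frac{\Gamma(2\nu+d)}{\Gamma^2(\nu+\frac{d+1}{2})}\exp\Big(2\nu+d+\frac16\Big),\quad C_{d,\nu}=\frac{2^{d+1}\pi^{(d+1)/2}\Gamma(\nu+\frac{d+1}{2})(2\nu)^\nu}{\Gamma(\nu)}.$$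
   Context: $\mathbb{S}^d=\{\bm{x}\in\mathbb{R}^{d+1}:\|\bm{x}\|_2=1\}$; $|\mathbb{S}^{d-1}|=2\pi^{d/2}/\Gamma(d/2)$; $K_\nu$ is the modified Bessel function of the second kind. $P_{m,d+1}$ is the Legendre polynomial of degree $m$ in $d+1$ dimensions: $P_{m,d+1}(t)=m!\,\Gamma(\frac d2)\sum_{k=0}^{\lfloor m/2\rfloor}(-1)^k\frac{(1-t^2)^kt^{m-2k}}{4^kk!(m-2k)!\Gamma(k+\frac d2)}$. Since $\|\bm{x}-\tilde{\bm{x}}\|_2=\sqrt{2-2\bm{x}^\top\tilde{\bm{x}}}$ on the sphere, $\tilde{k}$ exists. *)

theory Defs
  imports "HOL-Analysis.Analysis"
begin

definition besselK :: "real \<Rightarrow> real \<Rightarrow> real" where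
  "besselK nu z = integral {0..} (\<lambda>t. exp (- z * cosh t) * cosh (nu * t))"

text \<open>Matern kernel as a function of the Euclidean distance r = norm (x - x').
  At r = 0 it takes its limiting value 1 (the kernel is continuous).\<close>
definition matern :: "real \<Rightarrow> real \<Rightarrow> real \<Rightarrow> real" where
  "matern ell nu r =
     (if r = 0 then 1
      else 2 powr (1 - nu) / Gamma nu * (sqrt (2 * nu) * r / ell) powr nu
           * besselK nu (sqrt (2 * nu) * r / ell))"

text \<open>On the sphere, norm (x - x') = sqrt (2 - 2 x.x'), so k(x,x') = ktilde (x.x').\<close>
definition matern_tilde :: "real \<Rightarrow> real \<Rightarrow> real \<Rightarrow> real" where
  "matern_tilde ell nu t = matern ell nu (sqrt (2 - 2 * t))"

text \<open>Legendre polynomial of degree m in d+1 dimensions.\<close>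
definition legendreP :: "nat \<Rightarrow> nat \<Rightarrow> real \<Rightarrow> real" where
  "legendreP m d t = fact m * Gamma (real d / 2) *
     (\<Sum>k = 0..m div 2. (-1) ^ k * (1 - t\<^sup>2) ^ k * t ^ (m - 2 * k)
        / (4 ^ k * fact k * fact (m - 2 * k) * Gamma (real k + real d / 2)))"

text \<open>Surface area of the unit sphere S^{d-1}.\<close>
definition sphere_area :: "nat \<Rightarrow> real" where
  "sphere_area d = 2 * pi powr (real d / 2) / Gamma (real d / 2)"

definition matern_eigenvalue :: "nat \<Rightarrow> real \<Rightarrow> real \<Rightarrow> nat \<Rightarrow> real" where
  "matern_eigenvalue d ell nu m =
     sphere_area d * integral {-1..1}
       (\<lambda>t. legendreP m d t * matern_tilde ell nu t * (1 - t\<^sup>2) powr ((real d - 2) / 2))"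

definition C_const :: "nat \<Rightarrow> real \<Rightarrow> real" where
  "C_const d nu = 2 ^ (d + 1) * pi powr ((real d + 1) / 2) * Gamma (nu + (real d + 1) / 2)
                  * (2 * nu) powr nu / Gamma nu"

definition C_tilde :: "nat \<Rightarrow> real \<Rightarrow> real" where
  "C_tilde d nu = C_const d nu * Gamma (2 * nu + real d) / (Gamma (nu + (real d + 1) / 2))\<^sup>2
                  * exp (2 * nu + real d + 1 / 6)"

end

theory Submission
  imports Defs "HOL-Real_Asymp.Real_Asymp"
begin

(* With h = d/2, the Legendre polynomial P_{m,d+1} is a Gegenbauer polynomial, and Rodrigues'
   formula, integrated by parts m times, gives for every real a
     int_{-1}^1 (1-t^2)^(h-1) P_m(t) e^(a t) dt = a^m / (2^m (h)_m) * int_{-1}^1 (1-t^2)^(h+m-1) e^(a t) dt,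
   an explicit positive multiple of a^m.  The integral representation of K_nu shows that the Matern
   kernel is a mixture of such exponentials,
     ktilde(t) = Gamma(nu)^-1 * int_0^oo x^(-nu-1) e^(-1/x) e^(-c (1-t) x) dx,   c = nu / ell^2.
   Exchanging the two integrals and dropping the factor e^(-1/x) <= 1 leaves a Gamma integral in x
   and a Beta integral in t, whence lambda_m <= A * Gamma(m-nu) / Gamma(m+nu+d).  Log-convexity of
   Gamma bounds the ratio by (m-nu)^(-2nu-d) <= (m/2)^(-2nu-d), and Legendre's duplication formula
   gives A * 2^(2nu+d) * exp(2nu+d+1/6) = C_tilde / ell^(2nu). *)

section \<open>Integrals on the real line\<close>

lemma set_integrable_lborel_if_absolutely_integrable:
  fixes f :: "real \<Rightarrow> real"
  assumes "f absolutely_integrable_on S"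
    and S [measurable]: "S \<in> sets borel" and f [measurable]: "f \<in> borel_measurable borel"
  shows "set_integrable lborel S f"
  using assms(1) unfolding set_integrable_def by (subst (asm) integrable_completion) measurable

lemma set_integral_Ioo_eq_integral_Icc:
  fixes f :: "real \<Rightarrow> real"
  assumes "set_integrable lborel {a<..<b} f"
  shows "(LINT t:{a<..<b}|lborel. f t) = integral {a..b} f"
  using set_borel_integral_eq_integral[OF assms]
  by (metis has_integral_Icc_iff_Ioo integrable_integral integral_unique)

lemma nn_integral_Ioo_eq_integral_Icc:
  fixes f :: "real \<Rightarrow> real"
  assumes "continuous_on {a..b} f" "\<And>t. t \<in> {a..b} \<Longrightarrow> 0 \<le> f t"
  shows "(\<integral>\<^sup>+t. ennreal (indicator {a<..<b} t * f t) \<partial>lborel) = ennreal (integral {a..b} f)"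
proof -
  have "(f has_integral integral {a..b} f) {a<..<b}"
    unfolding has_integral_Icc_iff_Ioo[symmetric]
    by (intro integrable_integral integrable_continuous_interval assms(1))
  from nn_integral_has_integral_lebesgue[OF _ this] show ?thesis
    using assms(2) by simp
qed

lemma integrable_pair_lborel_mult:
  fixes f g :: "real \<Rightarrow> real"
  assumes f: "integrable lborel f" and g: "integrable lborel g"
  shows "integrable (lborel \<Otimes>\<^sub>M lborel) (\<lambda>(t, x). f t * g x)"
proof (rule lborel_pair.Fubini_integrable)
  have "(\<lambda>t. \<integral>x. norm (f t * g x) \<partial>lborel) = (\<lambda>t. norm (f t) * (\<integral>x. norm (g x) \<partial>lborel))"
    by (simp add: abs_mult)
  then show "integrable lborel (\<lambda>t. \<integral>x. norm ((\<lambda>(t, x). f t * g x) (t, x)) \<partial>lborel)"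
    using f by simp
  show "AE t in lborel. integrable lborel (\<lambda>x. (\<lambda>(t, x). f t * g x) (t, x))"
    using g by simp
  show "(\<lambda>(t, x). f t * g x) \<in> borel_measurable (lborel \<Otimes>\<^sub>M lborel)"
    using borel_measurable_integrable[OF f] borel_measurable_integrable[OF g] by measurable
qed

lemma has_integral_reflect_sum_atLeast0:
  fixes F :: "real \<Rightarrow> real"
  assumes F: "integrable lborel F"
  shows "((\<lambda>t. F t + F (- t)) has_integral (\<integral>t. F t \<partial>lborel)) {0..}"
proof -
  have F_neg: "integrable lborel (\<lambda>t. F (- t))"
    using lborel_integrable_real_affine[OF F, of "-1" 0] by simp
  have int: "set_integrable lborel A F" "set_integrable lborel A (\<lambda>t. F (- t))"
    if "A \<in> sets borel" for A
    using that integrable_mult_indicator[OF _ F, of A] integrable_mult_indicator[OF _ F_neg, of A]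
    unfolding set_integrable_def by simp_all
  have "(LINT t:{0..}|lborel. F (- t)) = (LINT t:{0<..}|lborel. F (- t))"
    by (rule set_integral_discrete_difference[where X = "{0}"]) auto
  also have "\<dots> = (LINT t:{..<0}|lborel. F t)"
    by (simp add: set_integral_reflect[of "{..<0}"] greaterThan_def)
  finally have "(LINT t:{0..}|lborel. F t + F (- t)) = (LINT t:{0..}|lborel. F t) + (LINT t:{..<0}|lborel. F t)"
    using int by simp
  also have "\<dots> = (LINT t:{0..} \<union> {..<0}|lborel. F t)"
    by (rule set_integral_Un[symmetric]) (auto intro: int)
  also have "{0..} \<union> {..<0} = (UNIV :: real set)"
    by auto
  also have "(LINT t:UNIV|lborel. F t) = (\<integral>t. F t \<partial>lborel)"
    by (simp add: set_lebesgue_integral_def)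
  finally show ?thesis
    using set_borel_integral_eq_integral[of "{0..}" "\<lambda>t. F t + F (- t)"] int
    by (metis atLeast_borel integrable_integral set_integral_add(1))
qed

lemma set_integrable_Gamma_integrand:
  fixes a :: real
  assumes "a > 0"
  shows "set_integrable lborel {0<..} (\<lambda>y. y powr (a - 1) * exp (- y))"
proof -
  have "((\<lambda>y. y powr (a - 1) * exp (- y)) has_integral Gamma a) {0..}"
    using Gamma_integral_real[OF assms] by (simp add: exp_minus field_simps)
  then have "set_integrable lborel {0..} (\<lambda>y. y powr (a - 1) * exp (- y))"
    by (intro set_integrable_lborel_if_absolutely_integrable nonnegative_absolutely_integrable_1)
       (auto simp: integrable_on_def)
  then show ?thesis
    by (rule set_integrable_subset) auto
qed

lemma nn_integral_powr_exp:
  fixes a b :: real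
  assumes "a > 0" "b > 0"
  shows "(\<integral>\<^sup>+x. ennreal (indicator {0<..} x * x powr (a - 1) * exp (- b * x)) \<partial>lborel)
           = ennreal (Gamma a / b powr a)"
    (is "?I = _")
proof -
  define f where "f t = ennreal (indicator {0..} t * t powr (a - 1) / exp t)" for t :: real
  have f_meas: "f \<in> borel_measurable borel"
    unfolding f_def by measurable
  have f_stretch: "f (0 + b * x) =
      ennreal (b powr (a - 1)) * ennreal (indicator {0<..} x * x powr (a - 1) * exp (- b * x))"
    for x
  proof (cases "x > 0")
    case True
    then show ?thesis
      unfolding f_def using assms
      by (simp add: ennreal_mult'[symmetric] powr_mult exp_minus divide_simps indicator_def)
  qed (use assms in \<open>auto simp: f_def indicator_def zero_le_mult_iff\<close>)
  have "ennreal (Gamma a) = (\<integral>\<^sup>+t. f t \<partial>lborel)"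
    unfolding f_def by (rule Gamma_conv_nn_integral_real[OF assms(1)])
  also have "\<dots> = ennreal b * (\<integral>\<^sup>+x. f (0 + b * x) \<partial>lborel)"
    using nn_integral_real_affine[OF f_meas, of b 0] assms by simp
  also have "(\<integral>\<^sup>+x. f (0 + b * x) \<partial>lborel) = ennreal (b powr (a - 1)) * ?I"
    unfolding f_stretch by (rule nn_integral_cmult) measurable
  finally have "ennreal (Gamma a) = ennreal (b powr a) * ?I"
    using assms by (simp add: ennreal_mult'[symmetric] mult.assoc[symmetric] powr_diff)
  then have "ennreal (1 / b powr a) * ennreal (Gamma a) = (ennreal (1 / b powr a) * ennreal (b powr a)) * ?I"
    by (simp add: mult.assoc)
  then show ?thesis
    using assms by (simp add: ennreal_mult'[symmetric])
qed

lemma has_integral_Beta_real_symmetric: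
  fixes p q :: real
  assumes "p > 0" "q > 0"
  shows "((\<lambda>t. (1 - t) powr (p - 1) * (1 + t) powr (q - 1)) has_integral 2 powr (p + q - 1) * Beta q p) {-1..1}"
proof -
  have "((\<lambda>x. (\<lambda>v. v powr (q - 1) * (1 - v) powr (p - 1)) ((1/2) *\<^sub>R x + 1/2)) has_integral
       (Beta q p /\<^sub>R (1/2) ^ DIM(real))) (cbox ((0 - 1/2) /\<^sub>R (1/2)) ((1 - 1/2) /\<^sub>R (1/2)))"
    by (rule has_integral_affinity') (use has_integral_Beta_real[OF assms(2,1)] in auto)
  then have "((\<lambda>t. ((1 + t) / 2) powr (q - 1) * ((1 - t) / 2) powr (p - 1)) has_integral 2 * Beta q p) {-1..1}"
    by (simp add: field_simps)
  then have "((\<lambda>t. 2 powr (p + q - 2) * (((1 + t) / 2) powr (q - 1) * ((1 - t) / 2) powr (p - 1)))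
      has_integral 2 powr (p + q - 2) * (2 * Beta q p)) {-1..1}"
    by (rule has_integral_mult_right)
  moreover have "2 powr (p + q - 2) * (2 * Beta q p) = 2 powr (p + q - 1) * Beta q p"
    by (simp add: powr_diff powr_add)
  moreover have "2 powr (p + q - 2) * (((1 + t) / 2) powr (q - 1) * ((1 - t) / 2) powr (p - 1))
      = (1 - t) powr (p - 1) * (1 + t) powr (q - 1)" if "t \<in> {-1..1}" for t
  proof -
    have "2 powr (p + q - 2) = 2 powr (q - 1) * 2 powr (p - 1)"
      by (simp add: powr_add[symmetric] algebra_simps)
    then show ?thesis
      using that by (simp add: powr_divide field_simps)
  qed
  ultimately show ?thesis
    by (metis (no_types, lifting) has_integral_eq)
qed

lemma nn_integral_Beta_real_symmetric:
  fixes p q :: real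
  assumes "p > 0" "q > 0"
  shows "(\<integral>\<^sup>+t. ennreal (indicator {-1<..<1} t * ((1 - t) powr (p - 1) * (1 + t) powr (q - 1))) \<partial>lborel)
     = ennreal (2 powr (p + q - 1) * Beta q p)"
proof -
  have "((\<lambda>t. (1 - t) powr (p - 1) * (1 + t) powr (q - 1)) has_integral 2 powr (p + q - 1) * Beta q p) {-1<..<1}"
    using has_integral_Beta_real_symmetric[OF assms] by (simp add: has_integral_Icc_iff_Ioo)
  from nn_integral_has_integral_lebesgue[OF _ this] show ?thesis
    by simp
qed

lemma powr_one_minus_square:
  fixes t a :: real
  assumes "t \<in> {-1..1}"
  shows "(1 - t\<^sup>2) powr a = (1 - t) powr a * (1 + t) powr a"
proof -
  have "1 - t\<^sup>2 = (1 - t) * (1 + t)"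
    by (simp add: power2_eq_square algebra_simps)
  moreover have "0 \<le> 1 - t" "0 \<le> 1 + t"
    using assms by auto
  ultimately show ?thesis
    by (simp add: powr_mult)
qed

lemma continuous_on_one_minus_square_powr:
  fixes q :: real
  assumes "q > 0"
  shows "continuous_on {-1..1} (\<lambda>t::real. (1 - t\<^sup>2) powr q)"
proof -
  have nonneg: "\<forall>t::real\<in>{-1..1}. 0 \<le> 1 - t\<^sup>2 \<and> (1 - t\<^sup>2 = 0 \<longrightarrow> 0 < q)"
  proof
    fix t :: real
    assume "t \<in> {-1..1}"
    then have "t\<^sup>2 \<le> 1"
      by (simp add: abs_square_le_1 abs_le_iff)
    then show "0 \<le> 1 - t\<^sup>2 \<and> (1 - t\<^sup>2 = 0 \<longrightarrow> 0 < q)"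
      using assms by simp
  qed
  show ?thesis
    by (rule continuous_on_powr'[OF _ _ nonneg]) (intro continuous_intros)+
qed

lemma absolutely_integrable_weighted:
  fixes h :: real
  assumes "h > 0" and g: "continuous_on {-1..1} g"
  shows "(\<lambda>t. (1 - t\<^sup>2) powr (h - 1) * g t) absolutely_integrable_on {-1..1}"
proof -
  have "((\<lambda>t. (1 - t\<^sup>2) powr (h - 1)) has_integral 2 powr (h + h - 1) * Beta h h) {-1..1}"
    using has_integral_Beta_real_symmetric[OF assms(1,1)]
    by (rule has_integral_eq[rotated]) (simp add: powr_one_minus_square[symmetric])
  then have "(\<lambda>t. (1 - t\<^sup>2) powr (h - 1)) absolutely_integrable_on {-1..1}"
    by (intro nonnegative_absolutely_integrable_1) auto
  then have "(\<lambda>t. g t * (1 - t\<^sup>2) powr (h - 1)) absolutely_integrable_on {-1..1}"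
  proof (rule absolutely_integrable_bounded_measurable_product_real[rotated 3])
    show "g \<in> borel_measurable (lebesgue_on {-1..1})"
      by (rule continuous_imp_measurable_on_sets_lebesgue[OF g]) auto
    show "bounded (g ` {-1..1})"
      by (rule compact_imp_bounded, rule compact_continuous_image[OF g]) auto
  qed auto
  then show ?thesis
    by (simp add: mult.commute)
qed

lemma set_integrable_weighted:
  fixes h :: real
  assumes "h > 0" and g: "continuous_on UNIV g"
  shows "set_integrable lborel {-1<..<1} (\<lambda>t. (1 - t\<^sup>2) powr (h - 1) * g t)"
proof -
  have [measurable]: "g \<in> borel_measurable borel"
    by (rule borel_measurable_continuous_onI[OF g])
  have "set_integrable lborel {-1..1} (\<lambda>t. (1 - t\<^sup>2) powr (h - 1) * g t)"
    by (intro set_integrable_lborel_if_absolutely_integrable absolutely_integrable_weighted assms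
        continuous_on_subset[OF g]) auto
  then show ?thesis
    by (rule set_integrable_subset) auto
qed

lemma nn_integral_powr_exp_shifted:
  fixes a b c t :: real
  assumes "c > 0" "a > b" "t \<in> {-1<..<1}"
  shows "(\<integral>\<^sup>+x. ennreal (indicator {0<..} x *
            (x powr (a - b - 1) * (1 - t\<^sup>2) powr (a - 1) * exp (- (c * (1 - t)) * x))) \<partial>lborel)
       = ennreal (Gamma (a - b) / c powr (a - b) * ((1 - t) powr (b - 1) * (1 + t) powr (a - 1)))"
proof -
  have "a - b > 0" "c * (1 - t) > 0" "0 < 1 - t"
    using assms by auto
  have "(\<integral>\<^sup>+x. ennreal (indicator {0<..} x *
      (x powr (a - b - 1) * (1 - t\<^sup>2) powr (a - 1) * exp (- (c * (1 - t)) * x))) \<partial>lborel)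
    = (\<integral>\<^sup>+x. ennreal ((1 - t\<^sup>2) powr (a - 1)) *
        ennreal (indicator {0<..} x * x powr (a - b - 1) * exp (- (c * (1 - t)) * x)) \<partial>lborel)"
    by (intro nn_integral_cong) (auto simp: ennreal_mult'[symmetric] indicator_def)
  also have "\<dots> = ennreal ((1 - t\<^sup>2) powr (a - 1) * (Gamma (a - b) / (c * (1 - t)) powr (a - b)))"
    using nn_integral_powr_exp[OF \<open>a - b > 0\<close> \<open>c * (1 - t) > 0\<close>]
    by (subst nn_integral_cmult) (auto simp: ennreal_mult'[symmetric])
  also have "(1 - t\<^sup>2) powr (a - 1) * (Gamma (a - b) / (c * (1 - t)) powr (a - b))
      = Gamma (a - b) / c powr (a - b) * ((1 - t) powr (b - 1) * (1 + t) powr (a - 1))"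
  proof -
    have "(1 - t\<^sup>2) powr (a - 1) = (1 - t) powr (b - 1) * (1 - t) powr (a - b) * (1 + t) powr (a - 1)"
      using assms(3) by (simp add: powr_one_minus_square powr_add[symmetric])
    moreover have "(c * (1 - t)) powr (a - b) = c powr (a - b) * (1 - t) powr (a - b)"
      using \<open>0 < 1 - t\<close> assms(1) by (simp add: powr_mult)
    ultimately show ?thesis
      using \<open>0 < 1 - t\<close> assms(1) by (simp add: field_simps)
  qed
  finally show ?thesis .
qed

lemma nn_integral_powr_weight_exp:
  fixes a b c :: real
  assumes "c > 0" "a > b" "b > 0"
  shows "(\<integral>\<^sup>+x. \<integral>\<^sup>+t. ennreal (indicator {0<..} x * indicator {-1<..<1} t *
            (x powr (a - b - 1) * (1 - t\<^sup>2) powr (a - 1) * exp (- (c * (1 - t)) * x))) \<partial>lborel \<partial>lborel)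
       = ennreal (Gamma (a - b) / c powr (a - b) * (2 powr (a + b - 1) * Beta a b))"
proof -
  define F where "F t x = ennreal (indicator {0<..} x * indicator {-1<..<1} t *
      (x powr (a - b - 1) * (1 - t\<^sup>2) powr (a - 1) * exp (- (c * (1 - t)) * x)))" for t x :: real
  have "Gamma (a - b) > 0"
    using assms by simp
  have inner: "(\<integral>\<^sup>+x. F t x \<partial>lborel) = ennreal (Gamma (a - b) / c powr (a - b)) *
      ennreal (indicator {-1<..<1} t * ((1 - t) powr (b - 1) * (1 + t) powr (a - 1)))" for t
  proof (cases "t \<in> {-1<..<1}")
    case True
    then show ?thesis
      using nn_integral_powr_exp_shifted[OF assms(1,2) True] \<open>Gamma (a - b) > 0\<close> assms(1)
      by (simp add: F_def ennreal_mult'[symmetric] mult_ac)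
  qed (simp add: F_def)
  have "(\<integral>\<^sup>+x. \<integral>\<^sup>+t. F t x \<partial>lborel \<partial>lborel) = (\<integral>\<^sup>+t. \<integral>\<^sup>+x. F t x \<partial>lborel \<partial>lborel)"
    by (rule lborel_pair.Fubini') (simp add: F_def)
  also have "\<dots> = ennreal (Gamma (a - b) / c powr (a - b)) * ennreal (2 powr (b + a - 1) * Beta a b)"
    unfolding inner using assms nn_integral_Beta_real_symmetric[of b a]
    by (subst nn_integral_cmult) auto
  finally show ?thesis
    using assms \<open>Gamma (a - b) > 0\<close> by (simp add: F_def ennreal_mult'[symmetric] algebra_simps)
qed

section \<open>Gegenbauer polynomials and Rodrigues' formula\<close>

lemma Gamma_plus1_real: "(x::real) > 0 \<Longrightarrow> Gamma (x + 1) = x * Gamma x"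
  by (metis Gamma_plus1 nonpos_Ints_nonpos not_le)

(* Extended by zero beyond k = m div 2, so that sums may run over k <= m and indices shift freely. *)
definition gegenbauer_rat_coeff :: "nat \<Rightarrow> nat \<Rightarrow> real" where
  "gegenbauer_rat_coeff m k = (if 2 * k \<le> m then (-1) ^ k / (4 ^ k * fact k * fact (m - 2 * k)) else 0)"

definition gegenbauer_coeff :: "real \<Rightarrow> nat \<Rightarrow> nat \<Rightarrow> real" where
  "gegenbauer_coeff h m k = gegenbauer_rat_coeff m k / Gamma (real k + h)"

(* legendreP with the half-dimension d/2 replaced by a real h > 0, which Rodrigues' formula shifts
   by one; up to normalisation it is the Gegenbauer polynomial C_m^(h-1/2). *)
definition gegenbauer :: "real \<Rightarrow> nat \<Rightarrow> real \<Rightarrow> real" where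
  "gegenbauer h m t = fact m * Gamma h * (\<Sum>k\<le>m. gegenbauer_coeff h m k * (1 - t\<^sup>2) ^ k * t ^ (m - 2 * k))"

lemma legendreP_eq_gegenbauer: "legendreP m d t = gegenbauer (real d / 2) m t"
proof -
  have "(\<Sum>k = 0..m div 2. (-1) ^ k * (1 - t\<^sup>2) ^ k * t ^ (m - 2 * k)
          / (4 ^ k * fact k * fact (m - 2 * k) * Gamma (real k + real d / 2)))
      = (\<Sum>k\<le>m. gegenbauer_coeff (real d / 2) m k * (1 - t\<^sup>2) ^ k * t ^ (m - 2 * k))"
    by (rule sum.mono_neutral_cong_left) (auto simp: gegenbauer_coeff_def gegenbauer_rat_coeff_def)
  then show ?thesis
    unfolding legendreP_def gegenbauer_def by simp
qed

lemma gegenbauer_0: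
  assumes "h > 0"
  shows "gegenbauer h 0 t = 1"
  using Gamma_real_pos[OF assms] by (simp add: gegenbauer_def gegenbauer_coeff_def gegenbauer_rat_coeff_def)

lemma continuous_on_gegenbauer [continuous_intros]: "continuous_on S (gegenbauer h m)"
  unfolding gegenbauer_def by (intro continuous_intros)

lemma gegenbauer_rat_coeff_rec:
  "real (Suc m) * gegenbauer_rat_coeff (Suc m) (Suc j)
     = gegenbauer_rat_coeff m (Suc j) - real (m - 2 * j) / 2 * gegenbauer_rat_coeff m j"
proof -
  consider (inner) n where "m = n + 2 * j + 2" | (edge) "m = 2 * j + 1" | (outer) "m \<le> 2 * j"
  proof -
    have "m \<le> 2 * j \<or> m = 2 * j + 1 \<or> (\<exists>n. m = n + 2 * j + 2)"
      by presburger
    then show thesis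
      using that by blast
  qed
  then show ?thesis
  proof cases
    case inner
    define N :: real where "N = (-1) ^ j / (4 ^ j * fact j * fact n)"
    have coeffs: "gegenbauer_rat_coeff (Suc m) (Suc j) = - N / (4 * (real j + 1) * (real n + 1))"
      "gegenbauer_rat_coeff m (Suc j) = - N / (4 * (real j + 1))"
      "gegenbauer_rat_coeff m j = N / ((real n + 1) * (real n + 2))"
      using inner by (simp_all add: gegenbauer_rat_coeff_def N_def algebra_simps)
    have "real (m - 2 * j) = real n + 2" "real (Suc m) = real n + 2 * real j + 3"
      using inner by simp_all
    moreover have "real j + 1 > 0" "real n + 1 > 0" "real n + 2 > 0"
      by simp_all
    ultimately show ?thesis
      unfolding coeffs by (simp add: divide_simps) (simp add: algebra_simps)
  next
    case edge
    define N :: real where "N = (-1) ^ j / (4 ^ j * fact j)"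
    have coeffs: "gegenbauer_rat_coeff (Suc m) (Suc j) = - N / (4 * (real j + 1))"
      "gegenbauer_rat_coeff m (Suc j) = 0" "gegenbauer_rat_coeff m j = N"
      using edge by (simp_all add: gegenbauer_rat_coeff_def N_def algebra_simps)
    have "real (m - 2 * j) = 1" "real (Suc m) = 2 * (real j + 1)"
      using edge by simp_all
    then show ?thesis
      unfolding coeffs by (simp add: divide_simps)
  next
    case outer
    then show ?thesis
      by (auto simp: gegenbauer_rat_coeff_def)
  qed
qed

lemma gegenbauer_coeff_rec:
  assumes "h > 0"
  shows "real (Suc m) * gegenbauer_coeff h (Suc m) (Suc j)
       = (h + real (Suc j)) * gegenbauer_coeff (h + 1) m (Suc j)
         - real (m - 2 * j) / 2 * gegenbauer_coeff (h + 1) m j"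
proof -
  define G where "G = Gamma (real (Suc j) + h)"
  have "G > 0"
    using assms by (simp add: G_def)
  have "Gamma (real (Suc j) + (h + 1)) = (h + real (Suc j)) * G" "Gamma (real j + (h + 1)) = G"
    using Gamma_plus1_real[of "real (Suc j) + h"] assms by (simp_all add: G_def algebra_simps)
  then have "(h + real (Suc j)) * gegenbauer_coeff (h + 1) m (Suc j) = gegenbauer_rat_coeff m (Suc j) / G"
    "gegenbauer_coeff (h + 1) m j = gegenbauer_rat_coeff m j / G"
    "gegenbauer_coeff h (Suc m) (Suc j) = gegenbauer_rat_coeff (Suc m) (Suc j) / G"
    using assms \<open>G > 0\<close> by (simp_all add: gegenbauer_coeff_def G_def)
  then show ?thesis
    using gegenbauer_rat_coeff_rec[of m j] by (simp add: diff_divide_distrib)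
qed

lemma gegenbauer_coeff_term_shift:
  assumes "h > 0"
  shows "(h + real (Suc k)) * u ^ Suc k * (gegenbauer_coeff (h + 1) m (Suc k) * t ^ (m - 2 * Suc k + 1))
         - real (m - 2 * k) / 2 * u ^ (k + 1) * (gegenbauer_coeff (h + 1) m k * t ^ (m - 2 * k - 1))
       = real (Suc m) * (u ^ Suc k * (gegenbauer_coeff h (Suc m) (Suc k) * t ^ (Suc m - 2 * Suc k)))"
proof (cases "2 * k < m")
  case True
  define T where "T = t ^ (Suc m - 2 * Suc k)"
  have t1: "gegenbauer_coeff (h + 1) m (Suc k) * t ^ (m - 2 * Suc k + 1) = gegenbauer_coeff (h + 1) m (Suc k) * T"
  proof (cases "2 * Suc k \<le> m")
    case True
    then have "m - 2 * Suc k + 1 = Suc m - 2 * Suc k"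
      by simp
    then show ?thesis
      by (simp add: T_def)
  qed (simp add: gegenbauer_coeff_def gegenbauer_rat_coeff_def)
  have t2: "t ^ (m - 2 * k - 1) = T"
    using True by (simp add: T_def)
  have "real (Suc m) * (u ^ Suc k * (gegenbauer_coeff h (Suc m) (Suc k) * T))
      = ((h + real (Suc k)) * gegenbauer_coeff (h + 1) m (Suc k)
          - real (m - 2 * k) / 2 * gegenbauer_coeff (h + 1) m k) * (u ^ Suc k * T)"
    unfolding gegenbauer_coeff_rec[OF assms, symmetric] by (simp only: mult_ac)
  then show ?thesis
    unfolding t1 t2 T_def[symmetric] by (simp add: algebra_simps)
next
  case False
  then show ?thesis
    by (auto simp: gegenbauer_coeff_def gegenbauer_rat_coeff_def)
qed

lemma gegenbauer_coeff_sum_shift: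
  assumes "h > 0"
  shows "(\<Sum>k\<le>m. gegenbauer_coeff (h + 1) m k *
            ((h + real k) * u ^ k * t ^ (m - 2 * k + 1)
              - real (m - 2 * k) / 2 * u ^ (k + 1) * t ^ (m - 2 * k - 1)))
       = real (Suc m) * (\<Sum>j\<le>Suc m. gegenbauer_coeff h (Suc m) j * u ^ j * t ^ (Suc m - 2 * j))"
proof -
  define A where "A k = (h + real k) * u ^ k * (gegenbauer_coeff (h + 1) m k * t ^ (m - 2 * k + 1))" for k
  define B where
    "B k = real (m - 2 * k) / 2 * u ^ (k + 1) * (gegenbauer_coeff (h + 1) m k * t ^ (m - 2 * k - 1))" for k
  define R where "R j = u ^ j * (gegenbauer_coeff h (Suc m) j * t ^ (Suc m - 2 * j))" for j
  have A_0: "A 0 = real (Suc m) * R 0"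
    using assms Gamma_plus1_real[of h]
    by (simp add: A_def R_def gegenbauer_coeff_def gegenbauer_rat_coeff_def divide_simps)
  have A_Suc: "A (Suc k) - B k = real (Suc m) * R (Suc k)" for k
    unfolding A_def B_def R_def by (rule gegenbauer_coeff_term_shift[OF assms])
  have "(\<Sum>k\<le>m. A k) = A 0 + (\<Sum>k\<le>m. A (Suc k))"
    using sum.atMost_Suc_shift[of A m] by (simp add: A_def gegenbauer_coeff_def gegenbauer_rat_coeff_def)
  then have "(\<Sum>k\<le>m. A k - B k) = A 0 + (\<Sum>k\<le>m. A (Suc k) - B k)"
    by (simp add: sum_subtractf)
  also have "\<dots> = real (Suc m) * (R 0 + (\<Sum>k\<le>m. R (Suc k)))"
    using A_Suc by (simp add: A_0 sum_distrib_left distrib_left)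
  also have "R 0 + (\<Sum>k\<le>m. R (Suc k)) = (\<Sum>j\<le>Suc m. R j)"
    by (rule sum.atMost_Suc_shift[symmetric])
  finally show ?thesis
    by (simp add: A_def B_def R_def right_diff_distrib mult_ac)
qed

lemma has_real_derivative_weighted_monomial:
  assumes "-1 < t" "t < 1"
  shows "((\<lambda>t. (1 - t\<^sup>2) powr h * (1 - t\<^sup>2) ^ k * t ^ n) has_real_derivative
           -2 * (1 - t\<^sup>2) powr (h - 1) *
             ((h + real k) * (1 - t\<^sup>2) ^ k * t ^ (n + 1) - real n / 2 * (1 - t\<^sup>2) ^ (k + 1) * t ^ (n - 1))) (at t)"
proof -
  define u where "u = 1 - t\<^sup>2"
  have "u > 0"
    using assms by (simp add: u_def abs_square_less_1)
  have "((\<lambda>t. (1 - t\<^sup>2) powr h * (1 - t\<^sup>2) ^ k * t ^ n) has_real_derivative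
      h * u powr (h - 1) * (-2 * t) * u ^ k * t ^ n + u powr h * (real k * u ^ (k - 1) * (-2 * t)) * t ^ n
        + u powr h * u ^ k * (real n * t ^ (n - 1))) (at t)"
    unfolding u_def using \<open>u > 0\<close>[unfolded u_def]
    by (auto intro!: derivative_eq_intros DERIV_fun_powr simp: algebra_simps)
  also have "u powr h = u powr (h - 1) * u"
    using \<open>u > 0\<close> by (simp add: powr_diff)
  also have "h * u powr (h - 1) * (-2 * t) * u ^ k * t ^ n
      + u powr (h - 1) * u * (real k * u ^ (k - 1) * (-2 * t)) * t ^ n
      + u powr (h - 1) * u * u ^ k * (real n * t ^ (n - 1))
    = -2 * u powr (h - 1) * ((h * u ^ k + real k * (u ^ (k - 1) * u)) * (t * t ^ n)
        - real n / 2 * u ^ (k + 1) * t ^ (n - 1))"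
    by (simp add: algebra_simps)
  also have "real k * (u ^ (k - 1) * u) = real k * u ^ k"
    by (cases k) simp_all
  finally show ?thesis
    unfolding u_def by (simp add: algebra_simps)
qed

lemma has_real_derivative_weighted_gegenbauer:
  assumes "h > 0" "-1 < t" "t < 1"
  shows "((\<lambda>t. (1 - t\<^sup>2) powr h * gegenbauer (h + 1) m t) has_real_derivative
           -2 * h * (1 - t\<^sup>2) powr (h - 1) * gegenbauer h (Suc m) t) (at t)"
proof -
  define c where "c k = gegenbauer_coeff (h + 1) m k" for k
  define D where "D k = (h + real k) * (1 - t\<^sup>2) ^ k * t ^ (m - 2 * k + 1)
      - real (m - 2 * k) / 2 * (1 - t\<^sup>2) ^ (k + 1) * t ^ (m - 2 * k - 1)" for k
  have "(\<lambda>t. (1 - t\<^sup>2) powr h * gegenbauer (h + 1) m t) =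
      (\<lambda>t. fact m * Gamma (h + 1) * (\<Sum>k\<le>m. c k * ((1 - t\<^sup>2) powr h * (1 - t\<^sup>2) ^ k * t ^ (m - 2 * k))))"
    by (auto simp: gegenbauer_def c_def sum_distrib_left algebra_simps)
  moreover have "((\<lambda>t. fact m * Gamma (h + 1) * (\<Sum>k\<le>m. c k * ((1 - t\<^sup>2) powr h * (1 - t\<^sup>2) ^ k * t ^ (m - 2 * k))))
      has_real_derivative fact m * Gamma (h + 1) * (\<Sum>k\<le>m. c k * (-2 * (1 - t\<^sup>2) powr (h - 1) * D k))) (at t)"
    unfolding D_def using assms(2,3) by (intro DERIV_cmult DERIV_sum has_real_derivative_weighted_monomial)
  ultimately have "((\<lambda>t. (1 - t\<^sup>2) powr h * gegenbauer (h + 1) m t) has_real_derivative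
      -2 * (1 - t\<^sup>2) powr (h - 1) * (fact m * Gamma (h + 1) * (\<Sum>k\<le>m. c k * D k))) (at t)"
    by (simp add: sum_distrib_left mult_ac)
  also have "fact m * Gamma (h + 1) * (\<Sum>k\<le>m. c k * D k) = h * gegenbauer h (Suc m) t"
    using Gamma_plus1_real[OF assms(1)]
    unfolding c_def D_def gegenbauer_coeff_sum_shift[OF assms(1)] by (simp add: gegenbauer_def algebra_simps)
  finally show ?thesis
    by (simp add: mult_ac)
qed

lemma has_integral_gegenbauer_exp_step:
  fixes h a :: real
  assumes "h > 0"
  shows "((\<lambda>t. (1 - t\<^sup>2) powr (h - 1) * gegenbauer h (Suc m) t * exp (a * t)) has_integral
           a / (2 * h) * integral {-1..1} (\<lambda>t. (1 - t\<^sup>2) powr h * gegenbauer (h + 1) m t * exp (a * t))) {-1..1}"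
proof -
  define F where "F t = (1 - t\<^sup>2) powr h * gegenbauer (h + 1) m t * exp (a * t)" for t
  have F_cont: "continuous_on {-1..1} F"
    unfolding F_def by (intro continuous_intros continuous_on_one_minus_square_powr assms)
  have "(F has_vector_derivative
      -2 * h * (1 - t\<^sup>2) powr (h - 1) * gegenbauer h (Suc m) t * exp (a * t) + a * F t) (at t)"
    if "t \<in> {-1<..<1}" for t
  proof -
    have "((\<lambda>t. exp (a * t)) has_real_derivative exp (a * t) * a) (at t)"
      by (auto intro!: derivative_eq_intros)
    from DERIV_mult[OF has_real_derivative_weighted_gegenbauer[OF assms, of t m] this] that
    show ?thesis
      unfolding F_def has_real_derivative_iff_has_vector_derivative[symmetric] by (simp add: algebra_simps)
  qed
  then have "((\<lambda>t. -2 * h * (1 - t\<^sup>2) powr (h - 1) * gegenbauer h (Suc m) t * exp (a * t) + a * F t)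
      has_integral F 1 - F (-1)) {-1..1}"
    by (intro fundamental_theorem_of_calculus_interior F_cont) auto
  from has_integral_diff[OF this has_integral_mult_right[OF integrable_integral, of F "{-1..1}" a]]
  have "((\<lambda>t. -2 * h * (1 - t\<^sup>2) powr (h - 1) * gegenbauer h (Suc m) t * exp (a * t))
      has_integral - a * integral {-1..1} F) {-1..1}"
    using integrable_continuous_interval[OF F_cont] by (simp add: F_def)
  from has_integral_mult_right[OF this, of "-1 / (2 * h)"] show ?thesis
    using assms unfolding F_def by (simp add: field_simps)
qed

lemma has_integral_gegenbauer_exp:
  fixes a h :: real
  assumes "h > 0"
  shows "((\<lambda>t. (1 - t\<^sup>2) powr (h - 1) * gegenbauer h m t * exp (a * t)) has_integral
           a ^ m / (2 ^ m * pochhammer h m) * integral {-1..1} (\<lambda>t. (1 - t\<^sup>2) powr (h + real m - 1) * exp (a * t)))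
         {-1..1}"
  using assms
proof (induction m arbitrary: h)
  case 0
  have "(\<lambda>t. (1 - t\<^sup>2) powr (h - 1) * exp (a * t)) absolutely_integrable_on {-1..1}"
    by (intro absolutely_integrable_weighted 0 continuous_intros)
  then show ?case
    using 0 by (simp add: gegenbauer_0 integrable_integral set_lebesgue_integral_eq_integral(1))
next
  case (Suc m)
  define J where "J = integral {-1..1} (\<lambda>t. (1 - t\<^sup>2) powr (h + real (Suc m) - 1) * exp (a * t))"
  have "integral {-1..1} (\<lambda>t. (1 - t\<^sup>2) powr h * gegenbauer (h + 1) m t * exp (a * t))
      = a ^ m / (2 ^ m * pochhammer (h + 1) m) * J"
    using integral_unique[OF Suc.IH[of "h + 1"]] Suc.prems by (simp add: J_def algebra_simps)
  moreover have "a / (2 * h) * (a ^ m / (2 ^ m * pochhammer (h + 1) m) * J)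
      = a ^ Suc m / (2 ^ Suc m * pochhammer h (Suc m)) * J"
    using pochhammer_pos[of "h + 1" m] Suc.prems by (simp add: pochhammer_rec field_simps)
  ultimately show ?case
    using has_integral_gegenbauer_exp_step[OF Suc.prems, of m a] by (simp add: J_def)
qed

lemma integral_weighted_gegenbauer_exp_decay:
  fixes h c x :: real
  assumes "h > 0"
  shows "integral {-1..1} (\<lambda>t. (1 - t\<^sup>2) powr (h - 1) * gegenbauer h m t * exp (- (c * (1 - t)) * x)) =
           (c * x) ^ m / (2 ^ m * pochhammer h m) *
           integral {-1..1} (\<lambda>t. (1 - t\<^sup>2) powr (h + real m - 1) * exp (- (c * (1 - t)) * x))"
proof -
  have shift: "exp (- (c * (1 - t)) * x) = exp (- (c * x)) * exp ((c * x) * t)" for t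
    by (simp add: exp_add[symmetric] algebra_simps)
  show ?thesis
    using integral_unique[OF has_integral_mult_right[OF has_integral_gegenbauer_exp[OF assms, of m "c * x"],
        of "exp (- (c * x))"]]
    unfolding shift by (simp add: mult_ac)
qed

section \<open>The Matern kernel as a mixture of exponentials\<close>

(* Unnormalised: its integral over (0, oo) is Gamma nu. *)
definition inv_gamma_density :: "real \<Rightarrow> real \<Rightarrow> real" where
  "inv_gamma_density nu x = x powr (- nu - 1) * exp (- 1 / x)"

lemma inv_gamma_density_nonneg: "0 \<le> inv_gamma_density nu x"
  by (simp add: inv_gamma_density_def)

lemma inv_gamma_density_measurable [measurable]: "inv_gamma_density nu \<in> borel_measurable borel"
  unfolding inv_gamma_density_def by measurable

lemma set_integrable_inv_gamma_density:
  fixes nu :: real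
  assumes "nu > 0"
  shows "set_integrable lborel {0<..} (inv_gamma_density nu)"
proof -
  have Gamma_reflected: "set_integrable lborel {..<0} (\<lambda>y. (- y) powr (nu - 1) * exp (- (- y)))"
    using lborel_integrable_real_affine[of "\<lambda>y. indicator {0<..} y *\<^sub>R (y powr (nu - 1) * exp (- y))" "-1" 0]
      set_integrable_Gamma_integrand[OF assms]
    unfolding set_integrable_def by (simp add: indicator_def if_distrib cong: if_cong)
  have subst: "inv_gamma_density nu (- 1 / y) * (1 / y\<^sup>2) = (- y) powr (nu - 1) * exp (- (- y))"
    if "y < 0" for y :: real
  proof -
    have "(1 / (- y)) powr (- nu - 1) = 1 powr (- nu - 1) / (- y) powr (- nu - 1)"
      using that by (intro powr_divide)
    then have "(- 1 / y) powr (- nu - 1) = (- y) powr (nu + 1)"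
      using powr_minus[of "- y" "nu + 1"] by (simp add: divide_inverse)
    moreover have "(- y) powr (nu + 1) * (1 / y\<^sup>2) = (- y) powr (nu - 1)"
      using that by (simp add: powr_add powr_diff power2_eq_square divide_simps)
    ultimately show ?thesis
      unfolding inv_gamma_density_def using that by (simp add: field_simps)
  qed
  have "set_integrable lborel {..<0} (\<lambda>y. inv_gamma_density nu (- 1 / y) * (1 / y\<^sup>2))"
    using Gamma_reflected subst set_integrable_cong[of lborel lborel "{..<0}" "{..<0}"
        "\<lambda>y. inv_gamma_density nu (- 1 / y) * (1 / y\<^sup>2)" "\<lambda>y. (- y) powr (nu - 1) * exp (- (- y))"]
    by auto
  moreover have "einterval (-\<infinity>) 0 = {..<(0::real)}"
    by (auto simp: einterval_def zero_ereal_def)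
  ultimately have "set_integrable lborel (einterval (-\<infinity>) 0) (\<lambda>y. inv_gamma_density nu (- 1 / y) * (1 / y\<^sup>2))"
    by simp
  then have "set_integrable lborel (einterval 0 \<infinity>) (inv_gamma_density nu)"
  proof (rule interval_integral_substitution_nonneg(1)[where a = "-\<infinity>" and b = 0
        and g = "\<lambda>y. - 1 / y" and g' = "\<lambda>y. 1 / y\<^sup>2", rotated -1])
    show "((ereal \<circ> (\<lambda>y. - 1 / y) \<circ> real_of_ereal) \<longlongrightarrow> 0) (at_right (-\<infinity>))"
      unfolding zero_ereal_def o_assoc[symmetric] ereal_tendsto_simps by real_asymp
    show "((ereal \<circ> (\<lambda>y. - 1 / y) \<circ> real_of_ereal) \<longlongrightarrow> \<infinity>) (at_left 0)"
      unfolding zero_ereal_def ereal_tendsto_simps1 unfolding ereal_tendsto_simps2 by real_asymp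
  qed (auto intro!: derivative_eq_intros continuous_intros
            simp: inv_gamma_density_def power2_eq_square zero_ereal_def)
  then show ?thesis
    by (simp add: einterval_def zero_ereal_def greaterThan_def)
qed

lemma set_integrable_inv_gamma_density_exp:
  fixes nu b :: real
  assumes "nu > 0" "b \<ge> 0"
  shows "set_integrable lborel {0<..} (\<lambda>x. inv_gamma_density nu x * exp (- b * x))"
proof (rule set_integrable_bound[OF set_integrable_inv_gamma_density[OF assms(1)]])
  show "AE x in lborel. x \<in> {0<..} \<longrightarrow>
      norm (inv_gamma_density nu x * exp (- b * x)) \<le> norm (inv_gamma_density nu x)"
    using assms(2) inv_gamma_density_nonneg
    by (intro AE_I2) (auto simp: abs_mult intro!: mult_left_le)
qed (simp add: set_borel_measurable_def)

lemma exp_cosh_ln_substitution: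
  fixes nu z x :: real
  assumes "z > 0" "x > 0"
  shows "exp (- z * cosh (ln (z * x / 2))) * exp (- nu * ln (z * x / 2)) * (1 / x)
       = (z / 2) powr (- nu) * (inv_gamma_density nu x * exp (- (z\<^sup>2 / 4) * x))"
proof -
  have "z * cosh (ln (z * x / 2)) = 1 / x + (z\<^sup>2 / 4) * x"
    using assms by (simp add: cosh_ln_real field_simps power2_eq_square)
  then have cosh: "- z * cosh (ln (z * x / 2)) = - 1 / x + - (z\<^sup>2 / 4) * x"
    by simp
  have "exp (- nu * ln (z * x / 2)) = ((z / 2) * x) powr (- nu)"
    using assms by (simp add: powr_def)
  then have exp_ln: "exp (- nu * ln (z * x / 2)) = (z / 2) powr (- nu) * x powr (- nu)"
    using assms powr_mult[of "z / 2" x "- nu"] by simp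
  have powr: "x powr (- nu - 1) = x powr (- nu) * (1 / x)"
    using assms by (simp add: powr_diff divide_simps)
  show ?thesis
    unfolding cosh exp_ln exp_add inv_gamma_density_def powr by (simp only: mult_ac)
qed

lemma integral_exp_cosh_exp:
  fixes nu z :: real
  assumes nu: "nu > 0" and z: "z > 0"
  shows "integrable lborel (\<lambda>t. exp (- z * cosh t) * exp (- nu * t))"
    and "(\<integral>t. exp (- z * cosh t) * exp (- nu * t) \<partial>lborel) =
           (z / 2) powr (- nu) * (LINT x:{0<..}|lborel. inv_gamma_density nu x * exp (- (z\<^sup>2 / 4) * x))"
proof -
  define F where "F t = exp (- z * cosh t) * exp (- nu * t)" for t
  have "set_integrable lborel {0<..} (\<lambda>x. (z / 2) powr (- nu) * (inv_gamma_density nu x * exp (- (z\<^sup>2 / 4) * x)))"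
    by (intro set_integrable_mult_right set_integrable_inv_gamma_density_exp nu) simp
  then have "set_integrable lborel {0<..} (\<lambda>x. F (ln (z * x / 2)) * (1 / x))"
    using set_integrable_cong[of lborel lborel "{0<..}" "{0<..}" "\<lambda>x. F (ln (z * x / 2)) * (1 / x)"]
      exp_cosh_ln_substitution[OF z] unfolding F_def by auto
  then have int: "set_integrable lborel (einterval 0 \<infinity>) (\<lambda>x. F (ln (z * x / 2)) * (1 / x))"
    by (simp add: einterval_def zero_ereal_def greaterThan_def)
  have lim_0: "((ereal \<circ> (\<lambda>x. ln (z * x / 2)) \<circ> real_of_ereal) \<longlongrightarrow> -\<infinity>) (at_right 0)"
    unfolding zero_ereal_def ereal_tendsto_simps1 unfolding ereal_tendsto_simps2 using z by real_asymp
  have lim_inf: "((ereal \<circ> (\<lambda>x. ln (z * x / 2)) \<circ> real_of_ereal) \<longlongrightarrow> \<infinity>) (at_left \<infinity>)"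
    unfolding ereal_tendsto_simps1 unfolding ereal_tendsto_simps2 using z by real_asymp
  note subst = interval_integral_substitution_nonneg[OF _ _ _ _ _ _ lim_0 lim_inf int]
  have "set_integrable lborel (einterval (-\<infinity>) \<infinity>) F"
    by (rule subst(1)) (use z in \<open>auto intro!: derivative_eq_intros continuous_intros simp: F_def zero_ereal_def\<close>)
  then show "integrable lborel (\<lambda>t. exp (- z * cosh t) * exp (- nu * t))"
    by (simp add: F_def set_integrable_def)
  have "(LBINT x=-\<infinity>..\<infinity>. F x) = (LBINT x=0..\<infinity>. F (ln (z * x / 2)) * (1 / x))"
    by (rule subst(2)) (use z in \<open>auto intro!: derivative_eq_intros continuous_intros simp: F_def zero_ereal_def\<close>)
  then have "(\<integral>t. F t \<partial>lborel) = (LINT x:{0<..}|lborel. F (ln (z * x / 2)) * (1 / x))"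
    by (simp add: interval_lebesgue_integral_def set_lebesgue_integral_def zero_ereal_def)
  also have "\<dots> = (LINT x:{0<..}|lborel. (z / 2) powr (- nu) * (inv_gamma_density nu x * exp (- (z\<^sup>2 / 4) * x)))"
    by (rule set_lebesgue_integral_cong) (use exp_cosh_ln_substitution[OF z] in \<open>auto simp: F_def\<close>)
  finally show "(\<integral>t. exp (- z * cosh t) * exp (- nu * t) \<partial>lborel) =
      (z / 2) powr (- nu) * (LINT x:{0<..}|lborel. inv_gamma_density nu x * exp (- (z\<^sup>2 / 4) * x))"
    by (simp add: F_def)
qed

lemma besselK_eq_inv_gamma_integral:
  fixes nu z :: real
  assumes "nu > 0" "z > 0"
  shows "besselK nu z =
           (z / 2) powr (- nu) / 2 * (LINT x:{0<..}|lborel. inv_gamma_density nu x * exp (- (z\<^sup>2 / 4) * x))"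
proof -
  define F where "F t = exp (- z * cosh t) * exp (- nu * t)" for t
  have "(\<lambda>t. exp (- z * cosh t) * cosh (nu * t)) = (\<lambda>t. (F t + F (- t)) / 2)"
    by (rule ext) (simp add: F_def cosh_def algebra_simps)
  then have "besselK nu z = integral {0..} (\<lambda>t. (F t + F (- t)) / 2)"
    by (simp only: besselK_def)
  also have "\<dots> = (\<integral>t. F t \<partial>lborel) / 2"
    using has_integral_reflect_sum_atLeast0[OF integral_exp_cosh_exp(1)[OF assms]]
    by (simp add: F_def integral_unique has_integral_divide)
  finally show ?thesis
    using integral_exp_cosh_exp(2)[OF assms] by (simp add: F_def)
qed

lemma matern_tilde_eq_inv_gamma_integral:
  fixes ell nu t :: real
  assumes "ell > 0" "nu > 0" "t < 1"
  shows "matern_tilde ell nu t =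
           (LINT x:{0<..}|lborel. inv_gamma_density nu x * exp (- (nu / ell\<^sup>2 * (1 - t)) * x)) / Gamma nu"
proof -
  define z where "z = sqrt (2 * nu) * sqrt (2 - 2 * t) / ell"
  define L where "L = (LINT x:{0<..}|lborel. inv_gamma_density nu x * exp (- (nu / ell\<^sup>2 * (1 - t)) * x))"
  have "z > 0"
    using assms by (simp add: z_def)
  have "z\<^sup>2 / 4 = nu / ell\<^sup>2 * (1 - t)"
    using assms by (simp add: z_def field_simps)
  then have "besselK nu z = (z / 2) powr (- nu) / 2 * L"
    unfolding L_def using besselK_eq_inv_gamma_integral[OF assms(2) \<open>z > 0\<close>] by simp
  moreover have "matern_tilde ell nu t = 2 powr (1 - nu) / Gamma nu * z powr nu * besselK nu z"
    using assms by (simp add: matern_tilde_def matern_def z_def)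
  moreover have "2 powr (1 - nu) * z powr nu * ((z / 2) powr (- nu) / 2) = 1"
    using \<open>z > 0\<close> by (simp add: powr_divide powr_diff powr_minus field_simps)
  ultimately show ?thesis
    unfolding L_def[symmetric] by (metis (no_types, lifting) mult.assoc times_divide_eq_left mult_1)
qed

section \<open>Bounding the eigenvalue\<close>

lemma integrable_gegenbauer_mixture:
  fixes h nu c :: real
  assumes "h > 0" "nu > 0" "c > 0"
  shows "integrable (lborel \<Otimes>\<^sub>M lborel) (\<lambda>(t, x). indicator {-1<..<1} t * indicator {0<..} x *
           ((1 - t\<^sup>2) powr (h - 1) * gegenbauer h m t * (inv_gamma_density nu x * exp (- (c * (1 - t)) * x))))"
proof (rule Bochner_Integration.integrable_bound)
  have "set_integrable lborel {-1<..<1} (\<lambda>t. (1 - t\<^sup>2) powr (h - 1) * \<bar>gegenbauer h m t\<bar>)"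
    by (intro set_integrable_weighted assms continuous_intros)
  then show "integrable (lborel \<Otimes>\<^sub>M lborel) (\<lambda>(t, x).
      (indicator {-1<..<1} t * ((1 - t\<^sup>2) powr (h - 1) * \<bar>gegenbauer h m t\<bar>)) *
      (indicator {0<..} x * inv_gamma_density nu x))"
    using set_integrable_inv_gamma_density[OF assms(2)]
    by (intro integrable_pair_lborel_mult) (simp_all add: set_integrable_def)
  show "(\<lambda>(t, x). indicator {-1<..<1} t * indicator {0<..} x *
      ((1 - t\<^sup>2) powr (h - 1) * gegenbauer h m t * (inv_gamma_density nu x * exp (- (c * (1 - t)) * x))))
      \<in> borel_measurable (lborel \<Otimes>\<^sub>M lborel)"
    using borel_measurable_continuous_onI[OF continuous_on_gegenbauer[of UNIV h m]] by measurable
  have "exp (- (c * (1 - t)) * x) \<le> 1" if "t < 1" "0 < x" for t x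
    using that assms(3) by simp
  then show "AE y in lborel \<Otimes>\<^sub>M lborel. norm ((\<lambda>(t, x). indicator {-1<..<1} t * indicator {0<..} x *
      ((1 - t\<^sup>2) powr (h - 1) * gegenbauer h m t * (inv_gamma_density nu x * exp (- (c * (1 - t)) * x)))) y)
    \<le> norm ((\<lambda>(t, x). (indicator {-1<..<1} t * ((1 - t\<^sup>2) powr (h - 1) * \<bar>gegenbauer h m t\<bar>)) *
      (indicator {0<..} x * inv_gamma_density nu x)) y)"
    using inv_gamma_density_nonneg
    by (intro AE_I2) (auto simp: indicator_def abs_mult intro!: mult_left_le mult_left_mono)
qed

lemma integral_gegenbauer_mixture_swap:
  fixes h nu c :: real and k :: "real \<Rightarrow> real"
  assumes "h > 0" "nu > 0" "c > 0"
    and k: "\<And>t. t \<in> {-1<..<1} \<Longrightarrow> k t = (LINT x:{0<..}|lborel. inv_gamma_density nu x * exp (- (c * (1 - t)) * x))"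
  shows "integral {-1..1} (\<lambda>t. (1 - t\<^sup>2) powr (h - 1) * gegenbauer h m t * k t) =
           (LINT x:{0<..}|lborel. inv_gamma_density nu x *
              integral {-1..1} (\<lambda>t. (1 - t\<^sup>2) powr (h - 1) * gegenbauer h m t * exp (- (c * (1 - t)) * x)))"
    (is "integral _ ?f = _")
proof -
  define H where "H t x = indicator {-1<..<1} t * indicator {0<..} x *
      ((1 - t\<^sup>2) powr (h - 1) * gegenbauer h m t * (inv_gamma_density nu x * exp (- (c * (1 - t)) * x)))"
    for t x :: real
  define g where "g x t = (1 - t\<^sup>2) powr (h - 1) * gegenbauer h m t * exp (- (c * (1 - t)) * x)" for x t
  have H_int: "integrable (lborel \<Otimes>\<^sub>M lborel) (\<lambda>(t, x). H t x)"
    unfolding H_def by (rule integrable_gegenbauer_mixture[OF assms(1-3)])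
  have inner_x: "(\<integral>x. H t x \<partial>lborel) = indicator {-1<..<1} t * ?f t" for t
  proof (cases "t \<in> {-1<..<1}")
    case True
    then have "(\<lambda>x. H t x) = (\<lambda>x. ((1 - t\<^sup>2) powr (h - 1) * gegenbauer h m t) *
        (indicator {0<..} x * (inv_gamma_density nu x * exp (- (c * (1 - t)) * x))))"
      by (auto simp: H_def fun_eq_iff)
    then show ?thesis
      using k[OF True] True by (simp add: set_lebesgue_integral_def)
  qed (simp add: H_def)
  have inner_t: "(\<integral>t. H t x \<partial>lborel) =
      indicator {0<..} x * (inv_gamma_density nu x * integral {-1..1} (g x))" for x
  proof -
    have "set_integrable lborel {-1<..<1} (g x)"
      unfolding g_def mult.assoc by (intro set_integrable_weighted assms(1) continuous_intros)
    then have "(LINT t:{-1<..<1}|lborel. g x t) = integral {-1..1} (g x)"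
      by (rule set_integral_Ioo_eq_integral_Icc)
    then show ?thesis
      unfolding H_def g_def set_lebesgue_integral_def by (simp add: mult_ac)
  qed
  have "integrable lborel (\<lambda>t. \<integral>x. H t x \<partial>lborel)"
    using lborel_pair.integrable_fst'[OF H_int] by simp
  then have "set_integrable lborel {-1<..<1} ?f"
    unfolding inner_x set_integrable_def by simp
  then have "integral {-1..1} ?f = (\<integral>t. \<integral>x. H t x \<partial>lborel \<partial>lborel)"
    unfolding inner_x by (simp add: set_integral_Ioo_eq_integral_Icc[symmetric] set_lebesgue_integral_def)
  also have "\<dots> = (\<integral>x. \<integral>t. H t x \<partial>lborel \<partial>lborel)"
    using lborel_pair.Fubini_integral[OF H_int] by simp
  finally show ?thesis
    unfolding inner_t g_def by (simp add: set_lebesgue_integral_def)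
qed

lemma matern_eigenvalue_eq_mixture:
  fixes d m :: nat and ell nu :: real
  assumes "d \<ge> 1" "ell > 0" "nu > 0"
  shows "matern_eigenvalue d ell nu m = sphere_area d / Gamma nu *
           (LINT x:{0<..}|lborel. inv_gamma_density nu x * integral {-1..1}
              (\<lambda>t. (1 - t\<^sup>2) powr (real d / 2 - 1) * gegenbauer (real d / 2) m t *
                exp (- (nu / ell\<^sup>2 * (1 - t)) * x)))"
proof -
  define h where "h = real d / 2"
  define k where "k t = Gamma nu * matern_tilde ell nu t" for t
  have "h > 0" "nu / ell\<^sup>2 > 0"
    using assms by (simp_all add: h_def)
  have exponent: "(real d - 2) / 2 = h - 1"
    by (simp add: h_def field_simps)
  have "integral {-1..1} (\<lambda>t. legendreP m d t * matern_tilde ell nu t * (1 - t\<^sup>2) powr ((real d - 2) / 2))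
      = integral {-1..1} (\<lambda>t. (1 - t\<^sup>2) powr (h - 1) * gegenbauer h m t * k t) / Gamma nu"
    unfolding exponent legendreP_eq_gegenbauer h_def[symmetric] k_def
    using Gamma_real_pos[OF assms(3)] by (simp add: mult_ac)
  also have "integral {-1..1} (\<lambda>t. (1 - t\<^sup>2) powr (h - 1) * gegenbauer h m t * k t)
      = (LINT x:{0<..}|lborel. inv_gamma_density nu x * integral {-1..1}
          (\<lambda>t. (1 - t\<^sup>2) powr (h - 1) * gegenbauer h m t * exp (- (nu / ell\<^sup>2 * (1 - t)) * x)))"
    using matern_tilde_eq_inv_gamma_integral[OF assms(2,3)] Gamma_real_pos[OF assms(3)]
    by (intro integral_gegenbauer_mixture_swap \<open>h > 0\<close> \<open>nu / ell\<^sup>2 > 0\<close> assms(3)) (simp add: k_def)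
  finally show ?thesis
    by (simp add: matern_eigenvalue_def h_def)
qed

lemma inv_gamma_density_mult_gegenbauer_integral_le:
  fixes h c nu x :: real
  assumes "h > 0" "c \<ge> 0" "x > 0"
  shows "inv_gamma_density nu x *
           integral {-1..1} (\<lambda>t. (1 - t\<^sup>2) powr (h - 1) * gegenbauer h m t * exp (- (c * (1 - t)) * x))
     \<le> c ^ m / (2 ^ m * pochhammer h m) * x powr (real m - nu - 1) *
           integral {-1..1} (\<lambda>t. (1 - t\<^sup>2) powr (h + real m - 1) * exp (- (c * (1 - t)) * x))"
proof -
  define J where "J = integral {-1..1} (\<lambda>t. (1 - t\<^sup>2) powr (h + real m - 1) * exp (- (c * (1 - t)) * x))"
  have "(\<lambda>t. (1 - t\<^sup>2) powr (h + real m - 1) * exp (- (c * (1 - t)) * x)) absolutely_integrable_on {-1..1}"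
    using assms by (intro absolutely_integrable_weighted continuous_intros) auto
  then have "J \<ge> 0"
    unfolding J_def by (intro integral_nonneg set_lebesgue_integral_eq_integral(1)) auto
  have "inv_gamma_density nu x * x ^ m = x powr (real m - nu - 1) * exp (- 1 / x)"
    using assms by (simp add: inv_gamma_density_def powr_realpow[symmetric] powr_add[symmetric] algebra_simps)
  also have "\<dots> \<le> x powr (real m - nu - 1)"
    using assms by (simp add: mult_right_le_one_le)
  finally have "inv_gamma_density nu x * x ^ m * (c ^ m / (2 ^ m * pochhammer h m) * J)
      \<le> x powr (real m - nu - 1) * (c ^ m / (2 ^ m * pochhammer h m) * J)"
    using \<open>J \<ge> 0\<close> assms pochhammer_pos[of h m]
    by (intro mult_right_mono) auto
  then show ?thesis
    unfolding integral_weighted_gegenbauer_exp_decay[OF assms(1)] J_def[symmetric]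
    by (simp add: power_mult_distrib mult_ac)
qed

lemma nn_inv_gamma_density_mult_gegenbauer_integral_le:
  fixes h c nu x :: real
  assumes "h > 0" "c > 0" "real m \<ge> 1"
  shows "ennreal (indicator {0<..} x * (inv_gamma_density nu x *
           integral {-1..1} (\<lambda>t. (1 - t\<^sup>2) powr (h - 1) * gegenbauer h m t * exp (- (c * (1 - t)) * x))))
     \<le> ennreal (c ^ m / (2 ^ m * pochhammer h m)) * (\<integral>\<^sup>+t. ennreal (indicator {0<..} x * indicator {-1<..<1} t *
           (x powr (real m - nu - 1) * (1 - t\<^sup>2) powr (h + real m - 1) * exp (- (c * (1 - t)) * x))) \<partial>lborel)"
proof (cases "x > 0")
  case True
  have "continuous_on {-1..1} (\<lambda>t::real. (1 - t\<^sup>2) powr (h + real m - 1))"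
    using assms by (intro continuous_on_one_minus_square_powr) linarith
  then have cont: "continuous_on {-1..1} (\<lambda>t. (1 - t\<^sup>2) powr (h + real m - 1) * exp (- (c * (1 - t)) * x))"
    by (rule continuous_on_mult) (intro continuous_intros)
  have "(\<integral>\<^sup>+t. ennreal (indicator {0<..} x * indicator {-1<..<1} t *
      (x powr (real m - nu - 1) * (1 - t\<^sup>2) powr (h + real m - 1) * exp (- (c * (1 - t)) * x))) \<partial>lborel)
    = (\<integral>\<^sup>+t. ennreal (x powr (real m - nu - 1)) * ennreal (indicator {-1<..<1} t *
        ((1 - t\<^sup>2) powr (h + real m - 1) * exp (- (c * (1 - t)) * x))) \<partial>lborel)"
    using True by (intro nn_integral_cong) (simp add: ennreal_mult'[symmetric] mult_ac)
  also have "\<dots> = ennreal (x powr (real m - nu - 1)) *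
      ennreal (integral {-1..1} (\<lambda>t. (1 - t\<^sup>2) powr (h + real m - 1) * exp (- (c * (1 - t)) * x)))"
    using nn_integral_Ioo_eq_integral_Icc[OF cont] by (subst nn_integral_cmult) simp_all
  finally show ?thesis
    using inv_gamma_density_mult_gegenbauer_integral_le[OF assms(1) less_imp_le[OF assms(2)] True, where m = m]
      True assms pochhammer_pos[OF assms(1), of m]
    by (simp add: ennreal_mult'[symmetric] ennreal_leI mult_ac)
qed simp

lemma inv_gamma_mixture_gegenbauer_le:
  fixes h c nu :: real
  assumes "h > 0" "nu > 0" "c > 0" "real m > nu"
  shows "(LINT x:{0<..}|lborel. inv_gamma_density nu x *
            integral {-1..1} (\<lambda>t. (1 - t\<^sup>2) powr (h - 1) * gegenbauer h m t * exp (- (c * (1 - t)) * x)))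
     \<le> c powr nu * Gamma (real m - nu) / (2 ^ m * pochhammer h m) *
          (2 powr ((h + real m) + (h + nu) - 1) * Beta (h + real m) (h + nu))"
proof -
  define K where "K = c ^ m / (2 ^ m * pochhammer h m)"
  define F where "F x t = ennreal (indicator {0<..} x * indicator {-1<..<1} t *
      (x powr (real m - nu - 1) * (1 - t\<^sup>2) powr (h + real m - 1) * exp (- (c * (1 - t)) * x)))" for x t :: real
  have "K > 0"
    using assms pochhammer_pos[of h m] by (simp add: K_def)
  have "real m \<ge> 1"
    using assms by (cases m) auto
  have "(\<integral>\<^sup>+x. ennreal (indicator {0<..} x * (inv_gamma_density nu x *
      integral {-1..1} (\<lambda>t. (1 - t\<^sup>2) powr (h - 1) * gegenbauer h m t * exp (- (c * (1 - t)) * x)))) \<partial>lborel)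
    \<le> (\<integral>\<^sup>+x. ennreal K * (\<integral>\<^sup>+t. F x t \<partial>lborel) \<partial>lborel)"
    unfolding K_def F_def
    by (intro nn_integral_mono nn_inv_gamma_density_mult_gegenbauer_integral_le assms(1,3) \<open>real m \<ge> 1\<close>)
  also have "\<dots> = ennreal K * (\<integral>\<^sup>+x. \<integral>\<^sup>+t. F x t \<partial>lborel \<partial>lborel)"
  proof (rule nn_integral_cmult)
    have "case_prod F \<in> borel_measurable (lborel \<Otimes>\<^sub>M lborel)"
      unfolding F_def by measurable
    from lborel.borel_measurable_nn_integral[OF this]
    show "(\<lambda>x. \<integral>\<^sup>+t. F x t \<partial>lborel) \<in> borel_measurable lborel"
      by simp
  qed
  also have "(\<integral>\<^sup>+x. \<integral>\<^sup>+t. F x t \<partial>lborel \<partial>lborel) = ennreal (Gamma (real m - nu) / c powr (real m - nu) *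
      (2 powr ((h + real m) + (h + nu) - 1) * Beta (h + real m) (h + nu)))"
  proof -
    have exponents: "h + real m - (h + nu) - 1 = real m - nu - 1" "h + real m - (h + nu) = real m - nu"
      by simp_all
    have "h + real m > h + nu" "h + nu > 0"
      using assms by simp_all
    from nn_integral_powr_weight_exp[OF assms(3) this, unfolded exponents] show ?thesis
      unfolding F_def .
  qed
  also have "ennreal K * ennreal (Gamma (real m - nu) / c powr (real m - nu) *
      (2 powr ((h + real m) + (h + nu) - 1) * Beta (h + real m) (h + nu)))
    = ennreal (c powr nu * Gamma (real m - nu) / (2 ^ m * pochhammer h m) *
      (2 powr ((h + real m) + (h + nu) - 1) * Beta (h + real m) (h + nu)))"
    using assms \<open>K > 0\<close> by (simp add: K_def ennreal_mult'[symmetric] powr_diff powr_realpow field_simps)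
  finally show ?thesis
    unfolding set_lebesgue_integral_def
    by (intro integral_real_bounded) (use assms pochhammer_pos[OF assms(1), of m] in \<open>auto simp: Beta_def\<close>)
qed

section \<open>Gamma function estimates\<close>

lemma Gamma_mult_powr_le_Gamma_add:
  fixes x s :: real
  assumes "x > 0" "s \<ge> 1"
  shows "Gamma x * x powr s \<le> Gamma (x + s)"
proof -
  define f where "f = ln \<circ> (Gamma :: real \<Rightarrow> real)"
  have "(1 - 1 / s) *\<^sub>R x + (1 / s) *\<^sub>R (x + s) = x + 1"
    using assms by (simp add: field_simps)
  then have convex: "f (x + 1) \<le> (1 - 1 / s) * f x + (1 / s) * f (x + s)"
    using convex_onD[OF log_convex_Gamma_real, of "1 / s" x "x + s"] assms by (simp add: f_def)
  have "f (x + 1) = ln (x * Gamma x)"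
    using assms Gamma_plus1_real[of x] by (simp add: f_def)
  also have "\<dots> = ln x + f x"
    unfolding f_def o_def by (rule ln_mult_pos) (use assms in auto)
  finally have "f (x + 1) = ln x + f x" .
  with convex have "s * ln x + f x \<le> f (x + s)"
    using assms by (simp add: field_simps)
  then have "exp (s * ln x + f x) \<le> exp (f (x + s))"
    by simp
  then show ?thesis
    using assms by (simp add: f_def exp_add powr_def mult.commute)
qed

lemma Gamma_ratio_le_powr:
  fixes m nu s :: real
  assumes "nu > 0" "m > 2 * nu" "s \<ge> 1"
  shows "Gamma (m - nu) / Gamma (m - nu + s) \<le> 2 powr s * m powr (- s)"
proof -
  have "m - nu > 0" "m - nu \<ge> m / 2"
    using assms by auto
  have "Gamma (m - nu) * (m - nu) powr s \<le> Gamma (m - nu + s)"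
    using Gamma_mult_powr_le_Gamma_add[OF \<open>m - nu > 0\<close> assms(3)] .
  then have "Gamma (m - nu) / Gamma (m - nu + s) \<le> (m - nu) powr (- s)"
    using \<open>m - nu > 0\<close> assms(3) by (simp add: divide_simps powr_minus)
  also have "\<dots> \<le> (m / 2) powr (- s)"
    using \<open>m - nu > 0\<close> \<open>m - nu \<ge> m / 2\<close> assms by (intro powr_mono2') auto
  also have "\<dots> = 2 powr s * m powr (- s)"
    using assms by (simp add: powr_divide powr_minus divide_simps)
  finally show ?thesis .
qed

lemma Gamma_legendre_duplication_real:
  fixes a :: real
  assumes "a > 0"
  shows "Gamma a * Gamma (a + 1 / 2) = 2 powr (1 - 2 * a) * sqrt pi * Gamma (2 * a)"
proof -
  have "complex_of_real a \<notin> \<int>\<^sub>\<le>\<^sub>0" "complex_of_real a + 1 / 2 \<notin> \<int>\<^sub>\<le>\<^sub>0"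
    using assms by (auto elim!: nonpos_Ints_cases simp: complex_eq_iff)
  from Gamma_legendre_duplication[OF this] have
    "complex_of_real (Gamma a * Gamma (a + 1 / 2)) =
       complex_of_real (exp ((1 - 2 * a) * ln 2) * sqrt pi * Gamma (2 * a))"
    by (simp flip: Gamma_complex_of_real exp_of_real)
  then have "Gamma a * Gamma (a + 1 / 2) = exp ((1 - 2 * a) * ln 2) * sqrt pi * Gamma (2 * a)"
    by (simp only: of_real_eq_iff)
  then show ?thesis
    by (simp add: powr_def)
qed

lemma C_tilde_eq:
  fixes nu ell :: real
  assumes "nu > 0" "ell > 0"
  shows "C_tilde d nu / ell powr (2 * nu) =
           (nu / ell\<^sup>2) powr nu / Gamma nu * (2 powr (real d + nu) * pi powr (real d / 2) * Gamma (nu + real d / 2)) *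
           (2 powr (2 * nu + real d) * exp (2 * nu + real d + 1 / 6))"
proof -
  define a where "a = nu + real d / 2"
  have "a > 0"
    using assms by (simp add: a_def)
  have two_a: "2 * a = 2 * nu + real d"
    by (simp add: a_def)
  have "2 powr (1 - 2 * a) = 2 / 2 powr (2 * a)"
    by (simp add: powr_diff)
  then have "Gamma (2 * a) = Gamma a * Gamma (a + 1 / 2) * 2 powr (2 * a) / (2 * sqrt pi)"
    using Gamma_legendre_duplication_real[OF \<open>a > 0\<close>] by (simp add: field_simps)
  note dup = this[unfolded two_a]
  have a_half: "nu + (real d + 1) / 2 = a + 1 / 2"
    by (simp add: a_def field_simps)
  have pi_half: "pi powr ((real d + 1) / 2) = pi powr (real d / 2) * sqrt pi"
    by (simp add: powr_half_sqrt[symmetric] powr_add[symmetric] add_divide_distrib)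
  have two_nu: "(2 * nu) powr nu = 2 powr nu * nu powr nu"
    using assms by (simp add: powr_mult)
  have two_d: "(2::real) ^ (d + 1) = 2 * 2 powr real d" "(2::real) powr (real d + nu) = 2 powr real d * 2 powr nu"
    by (simp_all add: powr_realpow powr_add)
  have ell: "(nu / ell\<^sup>2) powr nu = nu powr nu / ell powr (2 * nu)"
    using assms by (simp add: powr_divide powr_powr[symmetric])
  have "Gamma (a + 1 / 2) > 0"
    using \<open>a > 0\<close> by simp
  then show ?thesis
    unfolding C_tilde_def C_const_def dup a_half pi_half two_nu two_d ell a_def[symmetric]
    by (simp add: power2_eq_square field_simps)
qed

lemma sphere_area_mult_Beta:
  fixes c nu :: real
  assumes "d \<ge> 1"
  shows "sphere_area d / Gamma nu * (c powr nu * Gamma (real m - nu) / (2 ^ m * pochhammer (real d / 2) m) *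
           (2 powr ((real d / 2 + real m) + (real d / 2 + nu) - 1) * Beta (real d / 2 + real m) (real d / 2 + nu)))
       = c powr nu / Gamma nu * (2 powr (real d + nu) * pi powr (real d / 2) * Gamma (nu + real d / 2)) *
           (Gamma (real m - nu) / Gamma (real m - nu + (2 * nu + real d)))"
proof -
  define h where "h = real d / 2"
  have "h > 0"
    using assms by (simp add: h_def)
  then have "h \<notin> \<int>\<^sub>\<le>\<^sub>0"
    by (metis nonpos_Ints_nonpos not_le)
  then have poch: "pochhammer h m = Gamma (h + real m) / Gamma h"
    by (simp add: pochhammer_Gamma)
  have beta: "Beta (h + real m) (h + nu) =
      Gamma (h + real m) * Gamma (nu + h) / Gamma (real m - nu + (2 * nu + real d))"
    by (simp add: Beta_def h_def algebra_simps)
  have two: "2 powr ((h + real m) + (h + nu) - 1) = 2 powr (real d + nu) * 2 ^ m / 2"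
    by (simp add: h_def powr_diff powr_add powr_realpow)
  have "Gamma h > 0" "Gamma (h + real m) > 0"
    using \<open>h > 0\<close> by simp_all
  then show ?thesis
    unfolding sphere_area_def h_def[symmetric] poch beta two by (simp add: field_simps)
qed

theorem lemma14:
  fixes d m :: nat and ell nu :: real
  assumes "d \<ge> 1" and "ell > 0" and "nu > 1 / 2" and "real m > 2 * nu"
  shows "matern_eigenvalue d ell nu m \<le> C_tilde d nu / ell powr (2 * nu) * real m powr (- 2 * nu - real d)"
proof -
  define c where "c = nu / ell\<^sup>2"
  define s where "s = 2 * nu + real d"
  define A where
    "A = c powr nu / Gamma nu * (2 powr (real d + nu) * pi powr (real d / 2) * Gamma (nu + real d / 2))"
  have "nu > 0" "c > 0" "real m > nu" "s \<ge> 1" "real d / 2 > 0"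
    using assms by (auto simp: c_def s_def)
  then have "A \<ge> 0" "sphere_area d / Gamma nu \<ge> 0"
    by (simp_all add: A_def sphere_area_def)
  have "matern_eigenvalue d ell nu m \<le> A * (Gamma (real m - nu) / Gamma (real m - nu + s))"
    unfolding matern_eigenvalue_eq_mixture[OF assms(1,2) \<open>nu > 0\<close>] c_def[symmetric] A_def s_def
      sphere_area_mult_Beta[OF assms(1), symmetric]
    by (intro mult_left_mono inv_gamma_mixture_gegenbauer_le) fact+
  also have "\<dots> \<le> A * (2 powr s * real m powr (- s) * exp (s + 1 / 6))"
  proof (intro mult_left_mono \<open>A \<ge> 0\<close>)
    have "2 powr s * real m powr (- s) \<le> 2 powr s * real m powr (- s) * exp (s + 1 / 6)"
      using \<open>s \<ge> 1\<close> by (simp add: mult_le_cancel_left1 not_less)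
    then show "Gamma (real m - nu) / Gamma (real m - nu + s) \<le> 2 powr s * real m powr (- s) * exp (s + 1 / 6)"
      using Gamma_ratio_le_powr[OF \<open>nu > 0\<close> assms(4) \<open>s \<ge> 1\<close>] by linarith
  qed
  also have "\<dots> = C_tilde d nu / ell powr (2 * nu) * real m powr (- 2 * nu - real d)"
    unfolding C_tilde_eq[OF \<open>nu > 0\<close> assms(2)] A_def c_def s_def by (simp add: mult_ac)
  finally show ?thesis .
qed

end
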